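(* Let $AB\Gamma$ be a (nondegenerate) triangle with interior angles $A$, $B$, $\Gamma$ at the vertices $A$, $B$, $\Gamma$ respectively. Let $\ell_1$ be the line perpendicular to $AB$ through $B$, $\ell_2$ the line perpendicular to $B\Gamma$ through $\Gamma$, and $\ell_3$ the line perpendicular to $\Gamma A$ through $A$. These three lines bound a triangle $A'B'\Gamma'$. If $E$ and $E'$ denote the areas of triangles $AB\Gamma$ and $A'B'\Gamma'$ respectively, then $$\frac{E'}{E} = (\cot A + \cot B + \cot \Gamma)^2 .$$ *)

theory Defs
  imports "HOL-Analysis.Analysis"
begin

definition vangle :: "'a::real_inner \<Rightarrow> 'a \<Rightarrow> real" where
  "vangle u v = arccos ((u \<bullet> v) / (norm u * norm v))"

definition angle :: "'a::real_inner \<Rightarrow> 'a \<Rightarrow> 'a \<Rightarrow> real" where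
  "angle a b c = vangle (a - b) (c - b)"

definition perp_line :: "real^2 \<Rightarrow> real^2 \<Rightarrow> real^2 \<Rightarrow> (real^2) set" where
  "perp_line p q r = {x. (x - p) \<bullet> (r - q) = 0}"

definition tri_area :: "real^2 \<Rightarrow> real^2 \<Rightarrow> real^2 \<Rightarrow> real" where
  "tri_area a b c = measure lebesgue (convex hull {a, b, c})"

end

theory Submission
  imports Defs
begin

text \<open>
  In coordinates everything is polynomial. Let \<open>\<Delta>\<close> be the signed double area of \<open>AB\<Gamma>\<close> and
  \<open>a, b, c\<close> its side lengths. The cotangent of each angle is the inner product of the two
  adjacent edge vectors divided by \<open>|\<Delta>|\<close>, so \<open>cot A + cot B + cot \<Gamma> = (a\<^sup>2 + b\<^sup>2 + c\<^sup>2) / (2|\<Delta>|)\<close>.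
  Solving the linear equations of the perpendiculars for \<open>A'\<close>, \<open>B'\<close>, \<open>\<Gamma>'\<close> shows that the signed
  double area \<open>\<Delta>'\<close> of the outer triangle satisfies \<open>4 \<Delta>' \<Delta> = (a\<^sup>2 + b\<^sup>2 + c\<^sup>2)\<^sup>2\<close>, a polynomial
  identity modulo the six perpendicularity equations.
\<close>

definition cross2 :: "real^2 \<Rightarrow> real^2 \<Rightarrow> real" where
  "cross2 u v = u$1 * v$2 - u$2 * v$1"

lemma inner_real2: "(x::real^2) \<bullet> y = x$1 * y$1 + x$2 * y$2"
  by (simp add: inner_vec_def sum_2)

lemma cot_arccos:
  assumes "\<bar>t\<bar> < 1"
  shows "cot (arccos t) = t / sqrt (1 - t\<^sup>2)"
  using assms by (simp add: cot_def sin_arccos_abs)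

lemma cot_vangle:
  fixes u v :: "'a::real_inner"
  assumes nonparallel: "(u \<bullet> v)\<^sup>2 < (u \<bullet> u) * (v \<bullet> v)"
  shows "cot (vangle u v) = (u \<bullet> v) / sqrt ((u \<bullet> u) * (v \<bullet> v) - (u \<bullet> v)\<^sup>2)"
proof -
  define G where "G = (u \<bullet> u) * (v \<bullet> v)"
  define t where "t = (u \<bullet> v) / sqrt G"
  have G_pos: "G > 0"
    using nonparallel unfolding G_def by (smt (verit) zero_le_power2)
  have norms: "norm u * norm v = sqrt G"
    by (simp add: G_def norm_eq_sqrt_inner real_sqrt_mult)
  have t2: "t\<^sup>2 = (u \<bullet> v)\<^sup>2 / G"
    using G_pos by (simp add: t_def power_divide)
  have "\<bar>t\<bar> < 1"
    using t2 G_pos nonparallel by (simp add: G_def abs_square_less_1 [symmetric])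
  have "1 - t\<^sup>2 = (G - (u \<bullet> v)\<^sup>2) / G"
    using t2 G_pos by (simp add: field_simps)
  then have "t / sqrt (1 - t\<^sup>2) = (u \<bullet> v) / sqrt (G - (u \<bullet> v)\<^sup>2)"
    using G_pos by (simp add: t_def real_sqrt_divide)
  then show ?thesis
    using cot_arccos [OF \<open>\<bar>t\<bar> < 1\<close>] by (simp add: vangle_def norms t_def G_def)
qed

lemma lagrange_identity_real2:
  fixes u v :: "real^2"
  shows "(u \<bullet> u) * (v \<bullet> v) - (u \<bullet> v)\<^sup>2 = (cross2 u v)\<^sup>2"
  unfolding inner_real2 cross2_def by algebra

lemma cot_vangle_real2:
  fixes u v :: "real^2"
  assumes "cross2 u v \<noteq> 0"
  shows "cot (vangle u v) = (u \<bullet> v) / \<bar>cross2 u v\<bar>"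
proof -
  have "(u \<bullet> v)\<^sup>2 < (u \<bullet> u) * (v \<bullet> v)"
    using lagrange_identity_real2 [of u v] assms by (smt (verit) zero_less_power2)
  then show ?thesis
    by (simp add: cot_vangle lagrange_identity_real2)
qed

lemma cross2_neq_0_if_not_collinear:
  fixes a b c :: "real^2"
  assumes "\<not> collinear {a, b, c}"
  shows "cross2 (b - a) (c - a) \<noteq> 0"
proof
  assume cross0: "cross2 (b - a) (c - a) = 0"
  define x where "x = b - a"
  define y where "y = c - a"
  have xy: "x$1 * y$2 = x$2 * y$1"
    using cross0 by (simp add: cross2_def x_def y_def)
  have "collinear {0, x, y}"
  proof (cases "x = 0")
    case True
    then show ?thesis by (simp add: collinear_lemma)
  next
    case False
    then consider "x$1 \<noteq> 0" | "x$2 \<noteq> 0"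
      by (metis exhaust_2 vec_eq_iff zero_index)
    then obtain k where "y = k *\<^sub>R x"
    proof cases
      case 1
      with xy have "y = (y$1 / x$1) *\<^sub>R x"
        by (simp add: vec_eq_iff forall_2 field_simps)
      with that show ?thesis .
    next
      case 2
      with xy have "y = (y$2 / x$2) *\<^sub>R x"
        by (simp add: vec_eq_iff forall_2 field_simps)
      with that show ?thesis .
    qed
    then show ?thesis by (metis collinear_lemma)
  qed
  then have "collinear {a, b, c}"
    using collinear_3 [of b a c] by (simp add: x_def y_def insert_commute)
  with assms show False by simp
qed

lemma tri_area_cross2: "tri_area a b c = \<bar>cross2 (b - a) (c - a)\<bar> / 2"
proof -
  have "convex hull {a, b, c} \<in> sets lborel"
    unfolding sets_lborel
    by (intro borel_closed compact_imp_closed finite_imp_compact_convex_hull) auto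
  then show ?thesis
    using content_triangle [of a b c]
    by (simp add: tri_area_def cross2_def abs_minus_commute algebra_simps)
qed

lemma cot_angle_real2:
  fixes a b c :: "real^2"
  assumes "cross2 (a - b) (c - b) \<noteq> 0"
  shows "cot (angle a b c) = ((a - b) \<bullet> (c - b)) / \<bar>cross2 (a - b) (c - b)\<bar>"
  unfolding angle_def using assms by (rule cot_vangle_real2)

lemma cot_angles_sum:
  fixes A B C :: "real^2"
  assumes nondeg: "\<not> collinear {A, B, C}"
  shows "cot (angle B A C) + cot (angle A B C) + cot (angle A C B)
         = ((dist A B)\<^sup>2 + (dist B C)\<^sup>2 + (dist C A)\<^sup>2) / (2 * \<bar>cross2 (B - A) (C - A)\<bar>)"
proof -
  define D where "D = cross2 (B - A) (C - A)"
  have "D \<noteq> 0"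
    unfolding D_def using nondeg by (rule cross2_neq_0_if_not_collinear)
  moreover have "cross2 (A - B) (C - B) = - D" and "cross2 (A - C) (B - C) = D"
    by (simp_all add: D_def cross2_def algebra_simps)
  ultimately have
    "cot (angle B A C) + cot (angle A B C) + cot (angle A C B)
     = ((B - A) \<bullet> (C - A) + (A - B) \<bullet> (C - B) + (A - C) \<bullet> (B - C)) / \<bar>D\<bar>"
    by (simp add: cot_angle_real2 D_def [symmetric] add_divide_distrib)
  also have "(B - A) \<bullet> (C - A) + (A - B) \<bullet> (C - B) + (A - C) \<bullet> (B - C)
             = ((dist A B)\<^sup>2 + (dist B C)\<^sup>2 + (dist C A)\<^sup>2) / 2"
    by (simp add: dist_norm power2_norm_eq_inner inner_real2 algebra_simps)
  finally show ?thesis by (simp add: D_def)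
qed

lemma cross2_perpendicular_triangle:
  fixes A B C A' B' C' :: "real^2"
  assumes "C' \<in> perp_line B A B \<inter> perp_line C B C"
    and "A' \<in> perp_line C B C \<inter> perp_line A C A"
    and "B' \<in> perp_line A C A \<inter> perp_line B A B"
  shows "4 * cross2 (B' - A') (C' - A') * cross2 (B - A) (C - A)
         = ((dist A B)\<^sup>2 + (dist B C)\<^sup>2 + (dist C A)\<^sup>2)\<^sup>2"
  using assms
  unfolding perp_line_def cross2_def dist_norm power2_norm_eq_inner inner_real2
  by simp algebra

theorem mainTheorem1:
  fixes A B C A' B' C' :: "real^2"
  assumes nondeg: "\<not> collinear {A, B, C}"
    and C': "C' \<in> perp_line B A B \<inter> perp_line C B C"
    and A': "A' \<in> perp_line C B C \<inter> perp_line A C A"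
    and B': "B' \<in> perp_line A C A \<inter> perp_line B A B"
  shows "tri_area A' B' C' / tri_area A B C
         = (cot (angle B A C) + cot (angle A B C) + cot (angle A C B))^2"
proof -
  define D where "D = cross2 (B - A) (C - A)"
  define D' where "D' = cross2 (B' - A') (C' - A')"
  define S where "S = (dist A B)\<^sup>2 + (dist B C)\<^sup>2 + (dist C A)\<^sup>2"
  have "D \<noteq> 0"
    unfolding D_def using nondeg by (rule cross2_neq_0_if_not_collinear)
  have "4 * D' * D = S\<^sup>2"
    unfolding D_def D'_def S_def using C' A' B' by (rule cross2_perpendicular_triangle)
  then have "D' = S\<^sup>2 / (4 * D)"
    using \<open>D \<noteq> 0\<close> by (simp add: field_simps)
  then have "tri_area A' B' C' / tri_area A B C = (S / (2 * \<bar>D\<bar>))\<^sup>2"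
    using \<open>D \<noteq> 0\<close>
    by (simp add: tri_area_cross2 D_def [symmetric] D'_def [symmetric] abs_mult power_divide power2_eq_square)
  also have "\<dots> = (cot (angle B A C) + cot (angle A B C) + cot (angle A C B))\<^sup>2"
    by (simp add: cot_angles_sum [OF nondeg] S_def D_def)
  finally show ?thesis .
qed

end
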